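(* Let $H=(V,E,w)$ be a hypergraph with at least one hyperedge, and let $\gamma_1=\min\{D(f): f\in\mathbb{R}^n,\ \sum_v\deg(v)f(v)^2>0\}$, where $D(f)=\frac{\sum_{e\in E}w(e)\big(\max_{u\in e}f(u)+\min_{v\in e}f(v)\big)^2}{\sum_{v\in V}\deg(v)f(v)^2}$. Then there are disjoint sets $L,R\subset V$ with $\mathrm{vol}(L\cup R)>0$ such that $$\beta_H(L,R)\le\sqrt{2\gamma_1}.$$
   Context: A hypergraph $H=(V,E,w)$ has vertex set $V$ with $|V|=n$, hyperedges $E$ (subsets of $V$), weights $w:E\to\mathbb{R}_{>0}$; $\deg(v)=\sum_{e\ni v}w(e)$, $\mathrm{vol}(S)=\sum_{v\in S}\deg(v)$. For $A,B,C\subseteq V$, $w(A,B\mid C)=\sum_{e\in E}w(e)[e\cap A\ne\emptyset\wedge e\cap B\ne\emptyset\wedge e\cap C=\emptyset]$ and $w(A\mid C)=w(A,A\mid C)$. Writing $\overline{X}=V\setminus X$, the bipartiteness ratio of disjoint $L,R$ (with $\mathrm{vol}(L\cup R)>0$) is $\beta_H(L,R)=\frac{2w(L\mid\overline{L})+2w(R\mid\overline{R})+w(L,\overline{L\cup R}\mid R)+w(R,\overline{L\cup R}\mid L)}{\mathrm{vol}(L\cup R)}$. The quantity $\gamma_1$ is the minimum eigenvalue of the paper's hypergraph operator $D_H^{-1}J_H$. *)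

theory Defs
  imports Complex_Main
begin

definition hypergraph :: "'a set \<Rightarrow> 'a set set \<Rightarrow> ('a set \<Rightarrow> real) \<Rightarrow> bool" where
  "hypergraph V E w \<longleftrightarrow> finite V \<and> (\<forall>e\<in>E. e \<subseteq> V \<and> e \<noteq> {} \<and> w e > 0)"

definition hdeg :: "'a set set \<Rightarrow> ('a set \<Rightarrow> real) \<Rightarrow> 'a \<Rightarrow> real" where
  "hdeg E w v = (\<Sum>e\<in>{e\<in>E. v \<in> e}. w e)"

definition hvol :: "'a set set \<Rightarrow> ('a set \<Rightarrow> real) \<Rightarrow> 'a set \<Rightarrow> real" where
  "hvol E w S = (\<Sum>v\<in>S. hdeg E w v)"

definition wcut :: "'a set set \<Rightarrow> ('a set \<Rightarrow> real) \<Rightarrow> 'a set \<Rightarrow> 'a set \<Rightarrow> 'a set \<Rightarrow> real" where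
  "wcut E w A B C = (\<Sum>e\<in>{e\<in>E. e \<inter> A \<noteq> {} \<and> e \<inter> B \<noteq> {} \<and> e \<inter> C = {}}. w e)"

definition bipartiteness :: "'a set \<Rightarrow> 'a set set \<Rightarrow> ('a set \<Rightarrow> real) \<Rightarrow> 'a set \<Rightarrow> 'a set \<Rightarrow> real" where
  "bipartiteness V E w L R =
     (2 * wcut E w L L (V - L) + 2 * wcut E w R R (V - R)
      + wcut E w L (V - (L \<union> R)) R + wcut E w R (V - (L \<union> R)) L)
     / hvol E w (L \<union> R)"

definition Dnum :: "'a set set \<Rightarrow> ('a set \<Rightarrow> real) \<Rightarrow> ('a \<Rightarrow> real) \<Rightarrow> real" where
  "Dnum E w f = (\<Sum>e\<in>E. w e * (Max (f ` e) + Min (f ` e))\<^sup>2)"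

definition Dden :: "'a set \<Rightarrow> 'a set set \<Rightarrow> ('a set \<Rightarrow> real) \<Rightarrow> ('a \<Rightarrow> real) \<Rightarrow> real" where
  "Dden V E w f = (\<Sum>v\<in>V. hdeg E w v * (f v)\<^sup>2)"

definition gamma1 :: "'a set \<Rightarrow> 'a set set \<Rightarrow> ('a set \<Rightarrow> real) \<Rightarrow> real" where
  "gamma1 V E w = Inf {Dnum E w f / Dden V E w f | f. Dden V E w f > 0}"

end

theory Submission
  imports Defs "HOL-Analysis.Convex"
begin

(* Sweep rounding in the style of Trevisan's max-cut algorithm. For f with positive
   denominator and a threshold t > 0 put L = {f \<ge> t} and R = {f \<le> -t}. Averaging over t
   with weights that make t\<^sup>2 "uniform" on the values f(v)\<^sup>2, the volume of L \<union> R averages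
   to the denominator \<Sum>v deg(v) f(v)\<^sup>2 exactly, while a hyperedge e with a = max f and
   b = min f on e contributes at most w(e) |a + b| sqrt(2 \<Sum>v\<in>e f(v)\<^sup>2) to the averaged
   numerator of \<beta>; by Cauchy-Schwarz the numerator averages to at most sqrt(2 D(f)) times
   the denominator, so some threshold gives \<beta> \<le> sqrt(2 D(f)). As there are only finitely
   many pairs (L, R), a single pair achieves this for every f, hence for the infimum. *)

lemma ex_le_mult_of_weighted_sum_le:
  fixes \<mu> N D :: "'a \<Rightarrow> real"
  assumes "finite T" "\<And>t. t \<in> T \<Longrightarrow> 0 < \<mu> t"
    and "\<And>t. t \<in> T \<Longrightarrow> 0 \<le> N t" "\<And>t. t \<in> T \<Longrightarrow> 0 \<le> D t"
    and "(\<Sum>t\<in>T. \<mu> t * N t) \<le> c * (\<Sum>t\<in>T. \<mu> t * D t)" "0 < (\<Sum>t\<in>T. \<mu> t * D t)"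
  shows "\<exists>t\<in>T. 0 < D t \<and> N t \<le> c * D t"
proof (rule ccontr)
  assume none: "\<not> ?thesis"
  then have le: "\<mu> t * (c * D t) \<le> \<mu> t * N t" if "t \<in> T" for t
    using that assms(2-4)[of t] by (cases "D t = 0") (auto intro: mult_left_mono)
  obtain t\<^sub>0 where "t\<^sub>0 \<in> T" "0 < D t\<^sub>0"
  proof (rule ccontr)
    assume "\<not> thesis"
    then have "\<forall>t\<in>T. D t = 0" using that assms(4) by force
    then show False using assms(6) by simp
  qed
  then have "\<mu> t\<^sub>0 * (c * D t\<^sub>0) < \<mu> t\<^sub>0 * N t\<^sub>0"
    using none assms(2) by auto
  then have "(\<Sum>t\<in>T. \<mu> t * (c * D t)) < (\<Sum>t\<in>T. \<mu> t * N t)"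
    using assms(1) le \<open>t\<^sub>0 \<in> T\<close> by (intro sum_strict_mono_ex1) auto
  then show False
    using assms(5) by (simp add: sum_distrib_left mult.left_commute)
qed

lemma ex_uniform_le_of_finite:
  fixes g :: "'p \<Rightarrow> 'b::linorder"
  assumes "finite P" "X \<noteq> {}" "\<And>x. x \<in> X \<Longrightarrow> \<exists>p\<in>P. g p \<le> h x"
  shows "\<exists>p\<in>P. \<forall>x\<in>X. g p \<le> h x"
proof -
  have "P \<noteq> {}" using assms(2,3) by blast
  then obtain p where "p \<in> P" "\<forall>q\<in>P. g p \<le> g q"
    using ex_is_arg_min_if_finite[OF assms(1), of g] by (auto simp: is_arg_min_linorder)
  then show ?thesis
    using assms(3) by (meson order_trans)
qed

lemma le_sqrt_Inf:
  fixes X :: "real set"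
  assumes "X \<noteq> {}" "bdd_below X" "0 \<le> c" "\<And>x. x \<in> X \<Longrightarrow> y \<le> sqrt (c * x)"
  shows "y \<le> sqrt (c * Inf X)"
proof -
  have "mono (\<lambda>x. sqrt (c * x))"
    using assms(3) by (intro monoI) (simp add: mult_left_mono)
  then have "sqrt (c * Inf X) = (INF x\<in>X. sqrt (c * x))"
    using assms(1,2) by (intro continuous_at_Inf_mono) (auto intro!: continuous_intros)
  also have "y \<le> \<dots>"
    using assms(1,4) by (rule cINF_greatest)
  finally show ?thesis .
qed

lemma weighted_Cauchy_Schwarz:
  fixes w x y :: "'i \<Rightarrow> real"
  assumes "\<And>i. i \<in> I \<Longrightarrow> 0 \<le> w i"
  shows "(\<Sum>i\<in>I. w i * (x i * y i)) \<le> sqrt (\<Sum>i\<in>I. w i * (x i)\<^sup>2) * sqrt (\<Sum>i\<in>I. w i * (y i)\<^sup>2)"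
proof -
  have "(\<Sum>i\<in>I. w i * (x i * y i)) = (\<Sum>i\<in>I. (sqrt (w i) * x i) * (sqrt (w i) * y i))"
    using assms by (intro sum.cong) (auto simp: algebra_simps)
  also have "\<dots> \<le> sqrt ((\<Sum>i\<in>I. (sqrt (w i) * x i)\<^sup>2) * (\<Sum>i\<in>I. (sqrt (w i) * y i)\<^sup>2))"
    by (intro real_le_rsqrt Cauchy_Schwarz_ineq_sum)
  also have "\<dots> = sqrt (\<Sum>i\<in>I. w i * (x i)\<^sup>2) * sqrt (\<Sum>i\<in>I. w i * (y i)\<^sup>2)"
    using assms by (simp add: power_mult_distrib real_sqrt_mult)
  finally show ?thesis .
qed

(* t\<^sup>2 minus the square of the next smaller element of T (or of 0): the thresholds up to y
   then carry total weight y\<^sup>2, a discrete form of choosing t\<^sup>2 uniformly. *)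
definition layer_weight :: "real set \<Rightarrow> real \<Rightarrow> real" where
  "layer_weight T t = t\<^sup>2 - (Max (insert 0 {u\<in>T. u < t}))\<^sup>2"

lemma layer_weight_pos:
  assumes "finite T" "\<forall>u\<in>T. 0 < u" "t \<in> T"
  shows "0 < layer_weight T t"
proof -
  let ?p = "Max (insert 0 {u\<in>T. u < t})"
  have "0 \<le> ?p" "?p < t"
    using assms by (auto simp: Max_less_iff)
  then show ?thesis
    unfolding layer_weight_def by (simp add: power_strict_mono)
qed

lemma sum_layer_weight_atMost:
  assumes "finite T" "\<forall>u\<in>T. 0 < u" "y \<in> insert 0 T"
  shows "(\<Sum>t\<in>{t\<in>T. t \<le> y}. layer_weight T t) = y\<^sup>2"
  using assms(3)
proof (induction "card {t\<in>T. t \<le> y}" arbitrary: y rule: less_induct)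
  case less
  show ?case
  proof (cases "y = 0")
    case True
    have "{t\<in>T. t \<le> y} = {}" using assms(2) True by force
    then show ?thesis using True by (simp only:) simp
  next
    case False
    then have yT: "y \<in> T" using less.prems by auto
    define p where "p = Max (insert 0 {u\<in>T. u < y})"
    have p_in: "p \<in> insert 0 {u\<in>T. u < y}"
      unfolding p_def using assms(1) by (intro Max_in) auto
    have below_p: "\<And>u. u \<in> T \<Longrightarrow> u < y \<Longrightarrow> u \<le> p"
      unfolding p_def using assms(1) by auto
    have "p < y" "p \<in> insert 0 T" using p_in assms(2) yT by auto
    have split: "{t\<in>T. t \<le> y} = insert y {t\<in>T. t \<le> p}" and "y \<notin> {t\<in>T. t \<le> p}"
      using yT \<open>p < y\<close> below_p by force+
    then have "card {t\<in>T. t \<le> p} < card {t\<in>T. t \<le> y}"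
      using assms(1) by simp
    then have IH: "(\<Sum>t\<in>{t\<in>T. t \<le> p}. layer_weight T t) = p\<^sup>2"
      using less.hyps \<open>p \<in> insert 0 T\<close> by blast
    show ?thesis
      unfolding split using \<open>y \<notin> _\<close> assms(1) IH by (simp add: layer_weight_def p_def)
  qed
qed

lemma sum_layer_weight_interval:
  assumes "finite T" "\<forall>u\<in>T. 0 < u" "x \<in> insert 0 T" "y \<in> insert 0 T"
  shows "(\<Sum>t\<in>T. layer_weight T t * of_bool (x < t \<and> t \<le> y)) = max 0 (y\<^sup>2 - x\<^sup>2)"
proof (cases "x \<le> y")
  case True
  have "{t\<in>T. x < t \<and> t \<le> y} = {t\<in>T. t \<le> y} - {t\<in>T. t \<le> x}" by auto
  then have "(\<Sum>t\<in>T. layer_weight T t * of_bool (x < t \<and> t \<le> y)) = y\<^sup>2 - x\<^sup>2"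
    using True assms by (simp add: Int_def sum_diff sum_layer_weight_atMost subset_iff)
  moreover have "x\<^sup>2 \<le> y\<^sup>2"
    using True assms by (auto intro: power_mono)
  ultimately show ?thesis by simp
next
  case False
  then have "{t\<in>T. x < t \<and> t \<le> y} = {}" by auto
  moreover have "y\<^sup>2 \<le> x\<^sup>2"
    using False assms by (auto intro: power_mono)
  ultimately show ?thesis
    using assms(1) by (simp add: Int_def del: Collect_empty_eq)
qed

(* Bounds the coefficient of w(e) in the numerator of \<beta> at threshold t, where
   a = max f and b = min f on e (edge_crossing_le_crossing_charge). *)
definition crossing_charge :: "real \<Rightarrow> real \<Rightarrow> real \<Rightarrow> real" where
  "crossing_charge a b t = 2 * of_bool (t \<le> b) + 2 * of_bool (a \<le> -t)
     + of_bool (\<bar>b\<bar> < t \<and> t \<le> a) + of_bool (\<bar>a\<bar> < t \<and> t \<le> -b)"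

definition crossing_charge_total :: "real \<Rightarrow> real \<Rightarrow> real" where
  "crossing_charge_total a b = 2 * of_bool (0 < b) * b\<^sup>2 + 2 * of_bool (a < 0) * a\<^sup>2
     + of_bool (0 < a) * max 0 (a\<^sup>2 - b\<^sup>2) + of_bool (b < 0) * max 0 (b\<^sup>2 - a\<^sup>2)"

lemma sum_crossing_charge:
  assumes "finite T" "\<forall>u\<in>T. 0 < u" "\<bar>a\<bar> \<in> insert 0 T" "\<bar>b\<bar> \<in> insert 0 T"
  shows "(\<Sum>t\<in>T. layer_weight T t * crossing_charge a b t) = crossing_charge_total a b"
proof -
  note interval = sum_layer_weight_interval[OF assms(1,2)]
  have "crossing_charge a b t =
      2 * of_bool (0 < b) * of_bool (0 < t \<and> t \<le> \<bar>b\<bar>) + 2 * of_bool (a < 0) * of_bool (0 < t \<and> t \<le> \<bar>a\<bar>)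
      + of_bool (0 < a) * of_bool (\<bar>b\<bar> < t \<and> t \<le> \<bar>a\<bar>) + of_bool (b < 0) * of_bool (\<bar>a\<bar> < t \<and> t \<le> \<bar>b\<bar>)"
    if "t \<in> T" for t
    using that assms(2) unfolding crossing_charge_def by (auto simp: abs_if)
  then have "(\<Sum>t\<in>T. layer_weight T t * crossing_charge a b t) =
      2 * of_bool (0 < b) * (\<Sum>t\<in>T. layer_weight T t * of_bool (0 < t \<and> t \<le> \<bar>b\<bar>))
      + 2 * of_bool (a < 0) * (\<Sum>t\<in>T. layer_weight T t * of_bool (0 < t \<and> t \<le> \<bar>a\<bar>))
      + of_bool (0 < a) * (\<Sum>t\<in>T. layer_weight T t * of_bool (\<bar>b\<bar> < t \<and> t \<le> \<bar>a\<bar>))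
      + of_bool (b < 0) * (\<Sum>t\<in>T. layer_weight T t * of_bool (\<bar>a\<bar> < t \<and> t \<le> \<bar>b\<bar>))"
    by (simp add: sum.distrib sum_distrib_left algebra_simps)
  also have "\<dots> = crossing_charge_total a b"
    unfolding crossing_charge_total_def
    using interval[OF _ assms(3)] interval[OF _ assms(4)] interval[OF assms(3,4)] interval[OF assms(4,3)]
    by simp
  finally show ?thesis .
qed

lemma crossing_charge_total_le:
  fixes a b K :: real
  assumes "b \<le> a" "a\<^sup>2 \<le> K" "b\<^sup>2 \<le> K" "a \<noteq> b \<Longrightarrow> a\<^sup>2 + b\<^sup>2 \<le> K"
  shows "crossing_charge_total a b \<le> \<bar>a + b\<bar> * sqrt (2 * K)"
proof -
  have "0 \<le> K" using assms(2) by (meson order_trans zero_le_power2)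
  obtain m where "crossing_charge_total a b \<le> \<bar>a + b\<bar> * m" and "m \<le> sqrt (2 * K)"
  proof (cases "0 < b \<or> a < 0")
    case True
    have "crossing_charge_total a b \<le> \<bar>a + b\<bar> * max \<bar>a\<bar> \<bar>b\<bar>"
    proof (cases "0 < b")
      case True
      then have "b\<^sup>2 \<le> a * b" "b\<^sup>2 \<le> a\<^sup>2" using assms(1) by (auto simp: power2_eq_square intro: mult_mono)
      then show ?thesis using True assms(1) by (simp add: crossing_charge_total_def power2_eq_square algebra_simps)
    next
      case False
      then have "a < 0" using True by simp
      have "a * a \<le> a * b" "a * b \<le> b * b"
        using \<open>a < 0\<close> assms(1) by (auto intro: mult_left_mono_neg mult_right_mono_neg)
      moreover have "crossing_charge_total a b = 2 * (a * a) + max 0 (b * b - a * a)"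
        using False \<open>a < 0\<close> assms(1) by (simp add: crossing_charge_total_def power2_eq_square)
      moreover have "\<bar>a + b\<bar> * max \<bar>a\<bar> \<bar>b\<bar> = a * b + b * b"
        using \<open>a < 0\<close> assms(1) by (simp add: abs_if max_def algebra_simps)
      ultimately show ?thesis by (simp add: max_def)
    qed
    moreover have "max \<bar>a\<bar> \<bar>b\<bar> \<le> sqrt (2 * K)"
      using assms(2,3) \<open>0 \<le> K\<close> by (auto intro!: real_le_rsqrt)
    ultimately show ?thesis using that by blast
  next
    case False
    then have "crossing_charge_total a b = \<bar>a\<^sup>2 - b\<^sup>2\<bar>"
      by (cases "a = 0"; cases "b = 0") (auto simp: crossing_charge_total_def)
    also have "\<dots> = \<bar>(a + b) * (a - b)\<bar>"
      by (simp add: power2_eq_square algebra_simps)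
    also have "\<dots> = \<bar>a + b\<bar> * (a - b)"
      using assms(1) by (simp add: abs_mult)
    finally have "crossing_charge_total a b = \<bar>a + b\<bar> * (a - b)" .
    moreover have "a - b \<le> sqrt (2 * K)"
    proof (cases "a = b")
      case False
      then have "(a - b)\<^sup>2 \<le> 2 * K"
        using assms(4) sum_squares_ge_zero[of "a + b" 0] by (simp add: power2_eq_square algebra_simps)
      then show ?thesis by (rule real_le_rsqrt)
    qed (use \<open>0 \<le> K\<close> in simp)
    ultimately show ?thesis using that by auto
  qed
  then show ?thesis
    by (meson abs_ge_zero mult_left_mono order_trans)
qed

lemma Max_Min_image_attained:
  assumes "finite e" "e \<noteq> {}"
  obtains u v where "u \<in> e" "f u = Max (f ` e)" "v \<in> e" "f v = Min (f ` e)"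
proof -
  have "Max (f ` e) \<in> f ` e" "Min (f ` e) \<in> f ` e"
    using assms by (auto intro: Max_in Min_in)
  then show ?thesis using that by (metis imageE)
qed

definition upper_level :: "'a set \<Rightarrow> ('a \<Rightarrow> real) \<Rightarrow> real \<Rightarrow> 'a set" where
  "upper_level V f t = {v\<in>V. t \<le> f v}"

definition lower_level :: "'a set \<Rightarrow> ('a \<Rightarrow> real) \<Rightarrow> real \<Rightarrow> 'a set" where
  "lower_level V f t = {v\<in>V. f v \<le> -t}"

definition level_thresholds :: "'a set \<Rightarrow> ('a \<Rightarrow> real) \<Rightarrow> real set" where
  "level_thresholds V f = (\<lambda>v. \<bar>f v\<bar>) ` {v\<in>V. f v \<noteq> 0}"

lemma finite_level_thresholds: "finite V \<Longrightarrow> finite (level_thresholds V f)"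
  unfolding level_thresholds_def by simp

lemma level_thresholds_pos: "\<forall>t\<in>level_thresholds V f. 0 < t"
  unfolding level_thresholds_def by auto

lemma abs_in_level_thresholds: "v \<in> V \<Longrightarrow> \<bar>f v\<bar> \<in> insert 0 (level_thresholds V f)"
  unfolding level_thresholds_def by auto

lemma upper_lower_level_disjoint: "0 < t \<Longrightarrow> upper_level V f t \<inter> lower_level V f t = {}"
  unfolding upper_level_def lower_level_def by auto

lemma upper_union_lower_level: "0 < t \<Longrightarrow> upper_level V f t \<union> lower_level V f t = {v\<in>V. t \<le> \<bar>f v\<bar>}"
  unfolding upper_level_def lower_level_def by auto

lemma edge_crossing_le_crossing_charge:
  fixes f :: "'a \<Rightarrow> real"
  assumes "finite e" "e \<noteq> {}" "e \<subseteq> V" "0 < t"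
  defines "L \<equiv> upper_level V f t" and "R \<equiv> lower_level V f t"
  shows "2 * of_bool (e \<inter> L \<noteq> {} \<and> e \<inter> (V - L) = {}) + 2 * of_bool (e \<inter> R \<noteq> {} \<and> e \<inter> (V - R) = {})
    + of_bool (e \<inter> L \<noteq> {} \<and> e \<inter> (V - (L \<union> R)) \<noteq> {} \<and> e \<inter> R = {})
    + of_bool (e \<inter> R \<noteq> {} \<and> e \<inter> (V - (L \<union> R)) \<noteq> {} \<and> e \<inter> L = {})
    \<le> crossing_charge (Max (f ` e)) (Min (f ` e)) t"
proof -
  define a b where "a = Max (f ` e)" and "b = Min (f ` e)"
  obtain u\<^sub>a u\<^sub>b where u: "u\<^sub>a \<in> e" "f u\<^sub>a = a" "u\<^sub>b \<in> e" "f u\<^sub>b = b"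
    using Max_Min_image_attained[OF assms(1,2)] unfolding a_def b_def by metis
  have bounds: "b \<le> f v" "f v \<le> a" if "v \<in> e" for v
    using assms(1) that unfolding a_def b_def by simp_all
  have "u\<^sub>a \<in> V" "u\<^sub>b \<in> V" using u assms(3) by auto
  have "e \<inter> (V - L) = {} \<longrightarrow> t \<le> b"
    using u \<open>u\<^sub>b \<in> V\<close> unfolding L_def upper_level_def by blast
  moreover have "e \<inter> (V - R) = {} \<longrightarrow> a \<le> -t"
    using u \<open>u\<^sub>a \<in> V\<close> unfolding R_def lower_level_def by blast
  moreover have "t \<le> a" if "e \<inter> L \<noteq> {}"
    using that bounds unfolding L_def upper_level_def by (blast intro: order_trans)
  moreover have "-t < b" if "e \<inter> R = {}"
    using that u \<open>u\<^sub>b \<in> V\<close> unfolding R_def lower_level_def by force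
  moreover have "b < t" if "e \<inter> (V - (L \<union> R)) \<noteq> {}"
    using that bounds unfolding L_def upper_level_def by (force intro: le_less_trans)
  moreover have "b \<le> -t" if "e \<inter> R \<noteq> {}"
    using that bounds unfolding R_def lower_level_def by (blast intro: order_trans)
  moreover have "a < t" if "e \<inter> L = {}"
    using that u \<open>u\<^sub>a \<in> V\<close> unfolding L_def upper_level_def by force
  moreover have "-t < a" if "e \<inter> (V - (L \<union> R)) \<noteq> {}"
    using that bounds unfolding R_def lower_level_def by (force intro: less_le_trans)
  ultimately show ?thesis
    unfolding crossing_charge_def a_def b_def
    by (smt (verit) of_bool_less_eq_iff)
qed

lemma crossing_charge_total_edge_le:
  fixes f :: "'a \<Rightarrow> real"
  assumes "finite e" "e \<noteq> {}"
  shows "crossing_charge_total (Max (f ` e)) (Min (f ` e))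
    \<le> \<bar>Max (f ` e) + Min (f ` e)\<bar> * sqrt (2 * (\<Sum>v\<in>e. (f v)\<^sup>2))"
proof -
  obtain u\<^sub>a u\<^sub>b where u: "u\<^sub>a \<in> e" "f u\<^sub>a = Max (f ` e)" "u\<^sub>b \<in> e" "f u\<^sub>b = Min (f ` e)"
    using Max_Min_image_attained[OF assms] by metis
  have sq_le: "(f v)\<^sup>2 \<le> (\<Sum>v\<in>e. (f v)\<^sup>2)" if "v \<in> e" for v
    using assms(1) that by (intro member_le_sum) auto
  show ?thesis
  proof (rule crossing_charge_total_le)
    show "Min (f ` e) \<le> Max (f ` e)"
      using assms u(1) by (auto simp: Min_le_iff)
    show "(Max (f ` e))\<^sup>2 \<le> (\<Sum>v\<in>e. (f v)\<^sup>2)" "(Min (f ` e))\<^sup>2 \<le> (\<Sum>v\<in>e. (f v)\<^sup>2)"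
      using u sq_le by metis+
    show "(Max (f ` e))\<^sup>2 + (Min (f ` e))\<^sup>2 \<le> (\<Sum>v\<in>e. (f v)\<^sup>2)" if "Max (f ` e) \<noteq> Min (f ` e)"
    proof -
      have "{u\<^sub>a, u\<^sub>b} \<subseteq> e" "u\<^sub>a \<noteq> u\<^sub>b" using u that by auto
      then show ?thesis
        using u assms(1) sum_mono2[of e "{u\<^sub>a, u\<^sub>b}" "\<lambda>v. (f v)\<^sup>2"] by simp
    qed
  qed
qed

definition bipartiteness_num :: "'a set \<Rightarrow> 'a set set \<Rightarrow> ('a set \<Rightarrow> real) \<Rightarrow> 'a set \<Rightarrow> 'a set \<Rightarrow> real" where
  "bipartiteness_num V E w L R =
     2 * wcut E w L L (V - L) + 2 * wcut E w R R (V - R)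
     + wcut E w L (V - (L \<union> R)) R + wcut E w R (V - (L \<union> R)) L"

lemma bipartiteness_eq_num_div_vol:
  "bipartiteness V E w L R = bipartiteness_num V E w L R / hvol E w (L \<union> R)"
  unfolding bipartiteness_def bipartiteness_num_def ..

context
  fixes V :: "'a set" and E :: "'a set set" and w :: "'a set \<Rightarrow> real"
  assumes hg: "hypergraph V E w"
begin

lemma finite_vertices: "finite V"
  using hg unfolding hypergraph_def by simp

lemma
  assumes "e \<in> E"
  shows edge_subset: "e \<subseteq> V" and edge_nonempty: "e \<noteq> {}" and weight_pos: "0 < w e"
    and finite_edge: "finite e"
  using hg assms finite_vertices unfolding hypergraph_def by (auto intro: finite_subset)

lemma finite_edges: "finite E"
  using finite_vertices edge_subset by (intro finite_subset[of E "Pow V"]) auto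

lemma hdeg_nonneg: "0 \<le> hdeg E w v"
  unfolding hdeg_def using weight_pos by (intro sum_nonneg) (auto intro: less_imp_le)

lemma wcut_nonneg: "0 \<le> wcut E w A B C"
  unfolding wcut_def using weight_pos by (intro sum_nonneg) (auto intro: less_imp_le)

lemma Dnum_nonneg: "0 \<le> Dnum E w f"
  unfolding Dnum_def using weight_pos by (intro sum_nonneg) (simp add: less_imp_le)

lemma wcut_eq_sum_of_bool:
  "wcut E w A B C = (\<Sum>e\<in>E. w e * of_bool (e \<inter> A \<noteq> {} \<and> e \<inter> B \<noteq> {} \<and> e \<inter> C = {}))"
  unfolding wcut_def using finite_edges by (simp add: Int_def)

lemma sum_edges_sum_vertices:
  "(\<Sum>e\<in>E. w e * (\<Sum>v\<in>e. g v)) = (\<Sum>v\<in>V. hdeg E w v * g v)"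
proof -
  have "(\<Sum>v\<in>e. g v) = (\<Sum>v\<in>V. g v * of_bool (v \<in> e))" if "e \<in> E" for e
    using finite_vertices edge_subset[OF that] by (simp add: Int_absorb1 Int_def[symmetric])
  then have "(\<Sum>e\<in>E. w e * (\<Sum>v\<in>e. g v)) = (\<Sum>e\<in>E. \<Sum>v\<in>V. w e * g v * of_bool (v \<in> e))"
    by (simp add: sum_distrib_left mult.assoc)
  also have "\<dots> = (\<Sum>v\<in>V. \<Sum>e\<in>E. w e * g v * of_bool (v \<in> e))"
    by (rule sum.swap)
  also have "\<dots> = (\<Sum>v\<in>V. hdeg E w v * g v)"
    unfolding hdeg_def using finite_edges by (simp add: sum_distrib_right Int_def)
  finally show ?thesis .
qed

lemma Dden_one_pos:
  assumes "E \<noteq> {}"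
  shows "0 < Dden V E w (\<lambda>_. 1)"
proof -
  have "Dden V E w (\<lambda>_. 1) = (\<Sum>e\<in>E. w e * card e)"
    using sum_edges_sum_vertices[of "\<lambda>_. 1"] unfolding Dden_def by simp
  also have "0 < \<dots>"
    using assms finite_edges weight_pos finite_edge edge_nonempty
    by (intro sum_pos) (auto simp: card_gt_0_iff)
  finally show ?thesis .
qed

lemma bipartiteness_num_level_le:
  assumes "0 < t"
  shows "bipartiteness_num V E w (upper_level V f t) (lower_level V f t)
    \<le> (\<Sum>e\<in>E. w e * crossing_charge (Max (f ` e)) (Min (f ` e)) t)"
proof -
  let ?L = "upper_level V f t" and ?R = "lower_level V f t"
  have "bipartiteness_num V E w ?L ?R = (\<Sum>e\<in>E. w e *
      (2 * of_bool (e \<inter> ?L \<noteq> {} \<and> e \<inter> (V - ?L) = {}) + 2 * of_bool (e \<inter> ?R \<noteq> {} \<and> e \<inter> (V - ?R) = {})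
       + of_bool (e \<inter> ?L \<noteq> {} \<and> e \<inter> (V - (?L \<union> ?R)) \<noteq> {} \<and> e \<inter> ?R = {})
       + of_bool (e \<inter> ?R \<noteq> {} \<and> e \<inter> (V - (?L \<union> ?R)) \<noteq> {} \<and> e \<inter> ?L = {})))"
    unfolding bipartiteness_num_def wcut_eq_sum_of_bool
    by (simp add: sum.distrib sum_distrib_left algebra_simps)
  also have "\<dots> \<le> (\<Sum>e\<in>E. w e * crossing_charge (Max (f ` e)) (Min (f ` e)) t)"
    using edge_crossing_le_crossing_charge[OF finite_edge edge_nonempty edge_subset assms]
      weight_pos
    by (intro sum_mono mult_left_mono) (auto intro: less_imp_le)
  finally show ?thesis .
qed

lemma sum_crossing_charge_total_le:
  "(\<Sum>e\<in>E. w e * crossing_charge_total (Max (f ` e)) (Min (f ` e)))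
    \<le> sqrt (2 * Dnum E w f * Dden V E w f)"
proof -
  have "(\<Sum>e\<in>E. w e * crossing_charge_total (Max (f ` e)) (Min (f ` e)))
      \<le> (\<Sum>e\<in>E. w e * (\<bar>Max (f ` e) + Min (f ` e)\<bar> * sqrt (2 * (\<Sum>v\<in>e. (f v)\<^sup>2))))"
    using crossing_charge_total_edge_le[OF finite_edge edge_nonempty] weight_pos
    by (intro sum_mono mult_left_mono) (auto intro: less_imp_le)
  also have "\<dots> \<le> sqrt (\<Sum>e\<in>E. w e * \<bar>Max (f ` e) + Min (f ` e)\<bar>\<^sup>2)
      * sqrt (\<Sum>e\<in>E. w e * (sqrt (2 * (\<Sum>v\<in>e. (f v)\<^sup>2)))\<^sup>2)"
    using weight_pos by (intro weighted_Cauchy_Schwarz) (auto intro: less_imp_le)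
  also have "(\<Sum>e\<in>E. w e * (sqrt (2 * (\<Sum>v\<in>e. (f v)\<^sup>2)))\<^sup>2)
      = 2 * (\<Sum>e\<in>E. w e * (\<Sum>v\<in>e. (f v)\<^sup>2))"
    by (simp add: sum_nonneg sum_distrib_left mult.left_commute)
  also have "\<dots> = 2 * Dden V E w f"
    unfolding Dden_def sum_edges_sum_vertices ..
  also have "(\<Sum>e\<in>E. w e * \<bar>Max (f ` e) + Min (f ` e)\<bar>\<^sup>2) = Dnum E w f"
    unfolding Dnum_def by simp
  finally show ?thesis
    by (simp add: real_sqrt_mult mult_ac)
qed

lemma sum_layer_weight_bipartiteness_num_le:
  fixes f :: "'a \<Rightarrow> real"
  defines "T \<equiv> level_thresholds V f"
  shows "(\<Sum>t\<in>T. layer_weight T t * bipartiteness_num V E w (upper_level V f t) (lower_level V f t))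
    \<le> sqrt (2 * Dnum E w f * Dden V E w f)"
proof -
  have T: "finite T" "\<forall>t\<in>T. 0 < t"
    unfolding T_def using finite_vertices by (simp_all add: finite_level_thresholds level_thresholds_pos)
  have extremes_in_T: "\<bar>Max (f ` e)\<bar> \<in> insert 0 T" "\<bar>Min (f ` e)\<bar> \<in> insert 0 T" if "e \<in> E" for e
    using Max_Min_image_attained[OF finite_edge[OF that] edge_nonempty[OF that], of f]
      edge_subset[OF that] abs_in_level_thresholds unfolding T_def by (metis subsetD)+
  have "(\<Sum>t\<in>T. layer_weight T t * bipartiteness_num V E w (upper_level V f t) (lower_level V f t))
      \<le> (\<Sum>t\<in>T. layer_weight T t * (\<Sum>e\<in>E. w e * crossing_charge (Max (f ` e)) (Min (f ` e)) t))"
    using T bipartiteness_num_level_le layer_weight_pos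
    by (intro sum_mono mult_left_mono) (auto intro: less_imp_le)
  also have "\<dots> = (\<Sum>e\<in>E. w e * (\<Sum>t\<in>T. layer_weight T t * crossing_charge (Max (f ` e)) (Min (f ` e)) t))"
    by (simp add: sum_distrib_left sum.swap[of _ T] mult_ac)
  also have "\<dots> = (\<Sum>e\<in>E. w e * crossing_charge_total (Max (f ` e)) (Min (f ` e)))"
    using sum_crossing_charge[OF T] extremes_in_T by simp
  also have "\<dots> \<le> sqrt (2 * Dnum E w f * Dden V E w f)"
    by (rule sum_crossing_charge_total_le)
  finally show ?thesis .
qed

lemma sum_layer_weight_level_volume:
  fixes f :: "'a \<Rightarrow> real"
  defines "T \<equiv> level_thresholds V f"
  shows "(\<Sum>t\<in>T. layer_weight T t * hvol E w (upper_level V f t \<union> lower_level V f t)) = Dden V E w f"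
proof -
  have T: "finite T" "\<forall>t\<in>T. 0 < t"
    unfolding T_def using finite_vertices by (simp_all add: finite_level_thresholds level_thresholds_pos)
  have "hvol E w (upper_level V f t \<union> lower_level V f t) = (\<Sum>v\<in>V. hdeg E w v * of_bool (0 < t \<and> t \<le> \<bar>f v\<bar>))"
    if "t \<in> T" for t
    using that T finite_vertices unfolding hvol_def by (simp add: upper_union_lower_level Int_def)
  then have "(\<Sum>t\<in>T. layer_weight T t * hvol E w (upper_level V f t \<union> lower_level V f t))
      = (\<Sum>v\<in>V. hdeg E w v * (\<Sum>t\<in>T. layer_weight T t * of_bool (0 < t \<and> t \<le> \<bar>f v\<bar>)))"
    by (simp add: sum_distrib_left sum.swap[of _ T] mult_ac)
  also have "\<dots> = Dden V E w f"
  proof -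
    have "(\<Sum>t\<in>T. layer_weight T t * of_bool (0 < t \<and> t \<le> \<bar>f v\<bar>)) = (f v)\<^sup>2" if "v \<in> V" for v
      using sum_layer_weight_interval[OF T insertI1 abs_in_level_thresholds[OF that, of f, folded T_def]]
      by simp
    then show ?thesis
      unfolding Dden_def by simp
  qed
  finally show ?thesis .
qed

lemma sweep_cut_le:
  assumes "0 < Dden V E w f"
  shows "\<exists>L R. L \<subseteq> V \<and> R \<subseteq> V \<and> L \<inter> R = {} \<and> 0 < hvol E w (L \<union> R)
    \<and> bipartiteness V E w L R \<le> sqrt (2 * (Dnum E w f / Dden V E w f))"
proof -
  define T where "T = level_thresholds V f"
  define N where "N t = bipartiteness_num V E w (upper_level V f t) (lower_level V f t)" for t
  define D where "D t = hvol E w (upper_level V f t \<union> lower_level V f t)" for t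
  define c where "c = sqrt (2 * (Dnum E w f / Dden V E w f))"
  have T: "finite T" "\<forall>t\<in>T. 0 < t"
    unfolding T_def using finite_vertices by (simp_all add: finite_level_thresholds level_thresholds_pos)
  have "sqrt (2 * Dnum E w f * Dden V E w f) = sqrt (2 * (Dnum E w f / Dden V E w f) * (Dden V E w f)\<^sup>2)"
    using assms by (simp add: power2_eq_square)
  also have "\<dots> = c * Dden V E w f"
    unfolding c_def real_sqrt_mult[of _ "(Dden V E w f)\<^sup>2"] using assms by simp
  finally have "(\<Sum>t\<in>T. layer_weight T t * N t) \<le> c * (\<Sum>t\<in>T. layer_weight T t * D t)"
    using sum_layer_weight_bipartiteness_num_le[of f] sum_layer_weight_level_volume[of f]
    unfolding T_def N_def D_def by simp
  moreover have "0 < (\<Sum>t\<in>T. layer_weight T t * D t)"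
    using sum_layer_weight_level_volume[of f] assms unfolding T_def D_def by simp
  moreover have "0 \<le> N t" "0 \<le> D t" for t
    unfolding N_def D_def bipartiteness_num_def hvol_def using wcut_nonneg hdeg_nonneg
    by (simp_all add: sum_nonneg)
  ultimately obtain t where "t \<in> T" "0 < D t" "N t \<le> c * D t"
    using ex_le_mult_of_weighted_sum_le[of T "layer_weight T" N D c] T layer_weight_pos by blast
  show ?thesis
    unfolding c_def[symmetric]
  proof (intro exI conjI)
    show "upper_level V f t \<subseteq> V" "lower_level V f t \<subseteq> V"
      unfolding upper_level_def lower_level_def by auto
    show "upper_level V f t \<inter> lower_level V f t = {}"
      using \<open>t \<in> T\<close> T by (intro upper_lower_level_disjoint) auto
    show "0 < hvol E w (upper_level V f t \<union> lower_level V f t)"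
      using \<open>0 < D t\<close> unfolding D_def .
    show "bipartiteness V E w (upper_level V f t) (lower_level V f t) \<le> c"
      using \<open>0 < D t\<close> \<open>N t \<le> c * D t\<close> unfolding N_def D_def
      by (simp add: bipartiteness_eq_num_div_vol divide_le_eq)
  qed
qed

end

theorem theorem4:
  fixes V :: "'a set" and E :: "'a set set" and w :: "'a set \<Rightarrow> real"
  assumes "hypergraph V E w" and "E \<noteq> {}"
  shows "\<exists>L R. L \<subseteq> V \<and> R \<subseteq> V \<and> L \<inter> R = {} \<and> hvol E w (L \<union> R) > 0 \<and>
           bipartiteness V E w L R \<le> sqrt (2 * gamma1 V E w)"
proof -
  define X where "X = {Dnum E w f / Dden V E w f | f. Dden V E w f > 0}"
  define P where "P = {(L, R). L \<subseteq> V \<and> R \<subseteq> V \<and> L \<inter> R = {} \<and> 0 < hvol E w (L \<union> R)}"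
  have "finite P"
    using finite_vertices[OF assms(1)] by (intro finite_subset[of P "Pow V \<times> Pow V"]) (auto simp: P_def)
  moreover have "X \<noteq> {}"
    using Dden_one_pos[OF assms] unfolding X_def by blast
  moreover have "\<exists>p\<in>P. case_prod (bipartiteness V E w) p \<le> sqrt (2 * x)" if "x \<in> X" for x
    using that sweep_cut_le[OF assms(1)] unfolding X_def P_def by fastforce
  ultimately obtain L R where "(L, R) \<in> P" and uniform: "\<forall>x\<in>X. bipartiteness V E w L R \<le> sqrt (2 * x)"
    using ex_uniform_le_of_finite[of P X "case_prod (bipartiteness V E w)" "\<lambda>x. sqrt (2 * x)"] by auto
  have "bdd_below X"
    using Dnum_nonneg[OF assms(1)] unfolding X_def by (intro bdd_belowI[of _ 0]) auto
  then have "bipartiteness V E w L R \<le> sqrt (2 * gamma1 V E w)"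
    using le_sqrt_Inf[OF \<open>X \<noteq> {}\<close>] uniform unfolding gamma1_def X_def by simp
  with \<open>(L, R) \<in> P\<close> show ?thesis
    unfolding P_def by blast
qed

end
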